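(* Let $j,r\in\mathbb{N}$. Then for all $n\in\mathbb{N}$: $c_j^{(r-1)}(n)\le c_j^{(r)}(n)$; in particular $c_j(n)\le c_j^{(r)}(n)$; and moreover $c_j^{(r)}(n)\le d_{j+r}(n)$.
   Context: For $j,n\in\mathbb{N}$, $d_j(n)$ is the number of ordered $j$-tuples of positive integers with product $n$, and $c_j(n)$ is the number of ordered $j$-tuples of integers each $\ge 2$ with product $n$. The associated divisor functions are defined by $c_j^{(0)}=c_j$ and $c_j^{(r)}(n)=\sum_{m\mid n}c_j^{(r-1)}(m)$ for $r,n\in\mathbb{N}$. *)

theory Defs
  imports Main
begin

text \<open>Ordered j-tuples are represented as lists of length j.\<close>

definition d_fun :: "nat \<Rightarrow> nat \<Rightarrow> nat" where
  "d_fun j n = card {xs :: nat list. length xs = j \<and> (\<forall>x\<in>set xs. x \<ge> 1) \<and> prod_list xs = n}"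

definition c_fun :: "nat \<Rightarrow> nat \<Rightarrow> nat" where
  "c_fun j n = card {xs :: nat list. length xs = j \<and> (\<forall>x\<in>set xs. x \<ge> 2) \<and> prod_list xs = n}"

fun c_iter :: "nat \<Rightarrow> nat \<Rightarrow> nat \<Rightarrow> nat" where
  "c_iter j 0 n = c_fun j n"
| "c_iter j (Suc r) n = (\<Sum>m | m dvd n. c_iter j r m)"

end

theory Submission
  imports Defs
begin

text \<open>Since n divides itself, the divisor sum defining c_j^(r)(n) contains the term
  c_j^(r-1)(n), which gives monotonicity in r. For the upper bound, c_j <= d_j trivially, and
  the sum of d_k(m) over the divisors m of n is at most d_(k+1)(n), because prepending n/m to
  a factorisation of m into k factors yields, injectively, a factorisation of n into k+1
  factors; induction on r finishes the proof.\<close>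

definition pos_factorizations :: "nat \<Rightarrow> nat \<Rightarrow> nat list set" where
  "pos_factorizations k n = {xs. length xs = k \<and> (\<forall>x\<in>set xs. x \<ge> 1) \<and> prod_list xs = n}"

lemma d_fun_eq_card_pos_factorizations: "d_fun k n = card (pos_factorizations k n)"
  by (simp add: d_fun_def pos_factorizations_def)

lemma finite_pos_factorizations:
  assumes "n \<ge> 1"
  shows "finite (pos_factorizations k n)"
proof (rule finite_subset)
  show "pos_factorizations k n \<subseteq> {xs. set xs \<subseteq> {..n} \<and> length xs = k}"
  proof
    fix xs assume "xs \<in> pos_factorizations k n"
    then have "length xs = k" and prod: "prod_list xs = n"
      by (auto simp: pos_factorizations_def)
    moreover have "set xs \<subseteq> {..n}"
    proof
      fix x assume "x \<in> set xs"
      then have "x dvd n" using prod prod_list_dvd by blast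
      then show "x \<in> {..n}" using assms by (auto intro: dvd_imp_le)
    qed
    ultimately show "xs \<in> {xs. set xs \<subseteq> {..n} \<and> length xs = k}" by simp
  qed
  show "finite {xs. set xs \<subseteq> {..n} \<and> length xs = k}"
    by (rule finite_lists_length_eq) simp
qed

lemma c_fun_le_d_fun:
  assumes "n \<ge> 1"
  shows "c_fun k n \<le> d_fun k n"
proof -
  have "{xs. length xs = k \<and> (\<forall>x\<in>set xs. x \<ge> 2) \<and> prod_list xs = n} \<subseteq> pos_factorizations k n"
    by (auto simp: pos_factorizations_def)
  then show ?thesis
    unfolding c_fun_def d_fun_eq_card_pos_factorizations
    using finite_pos_factorizations[OF assms] by (rule card_mono[rotated])
qed

lemma sum_divisors_d_fun_le:
  assumes "n \<ge> 1"
  shows "(\<Sum>m | m dvd n. d_fun k m) \<le> d_fun (Suc k) n"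
proof -
  let ?pairs = "SIGMA m:{m. m dvd n}. pos_factorizations k m"
  let ?prepend = "\<lambda>(m, xs). (n div m) # xs"
  have divisors_pos: "m \<ge> 1" if "m dvd n" for m
    using that assms by (cases m) auto
  have "finite {m. m dvd n}" using assms by simp
  then have "(\<Sum>m | m dvd n. d_fun k m) = card ?pairs"
    using divisors_pos finite_pos_factorizations
    by (subst card_SigmaI) (auto simp: d_fun_eq_card_pos_factorizations)
  also have "\<dots> \<le> card (pos_factorizations (Suc k) n)"
  proof (rule card_inj_on_le)
    show "inj_on ?prepend ?pairs"
      by (auto simp: inj_on_def pos_factorizations_def)
    show "?prepend ` ?pairs \<subseteq> pos_factorizations (Suc k) n"
      using assms by (auto simp: pos_factorizations_def Suc_le_eq elim!: dvdE)
    show "finite (pos_factorizations (Suc k) n)"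
      using assms by (rule finite_pos_factorizations)
  qed
  finally show ?thesis by (simp add: d_fun_eq_card_pos_factorizations)
qed

lemma c_iter_le_Suc:
  assumes "n \<ge> 1"
  shows "c_iter j r n \<le> c_iter j (Suc r) n"
proof -
  have "finite {m. m dvd n}" using assms by simp
  then have "c_iter j r n \<le> (\<Sum>m | m dvd n. c_iter j r m)"
    by (metis (no_types, lifting) dvd_refl mem_Collect_eq member_le_sum zero_le)
  then show ?thesis by simp
qed

lemma c_iter_mono:
  assumes "n \<ge> 1" and "r \<le> s"
  shows "c_iter j r n \<le> c_iter j s n"
  using c_iter_le_Suc[OF assms(1)] assms(2) by (rule lift_Suc_mono_le)

lemma c_iter_le_d_fun:
  assumes "n \<ge> 1"
  shows "c_iter j r n \<le> d_fun (j + r) n"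
  using assms
proof (induction r arbitrary: n)
  case 0
  then show ?case by (simp add: c_fun_le_d_fun)
next
  case (Suc r)
  have "c_iter j (Suc r) n = (\<Sum>m | m dvd n. c_iter j r m)" by simp
  also have "\<dots> \<le> (\<Sum>m | m dvd n. d_fun (j + r) m)"
  proof (rule sum_mono)
    fix m assume "m \<in> {m. m dvd n}"
    with Suc.prems have "m \<ge> 1" by (cases m) auto
    then show "c_iter j r m \<le> d_fun (j + r) m" by (rule Suc.IH)
  qed
  also have "\<dots> \<le> d_fun (Suc (j + r)) n"
    using Suc.prems by (rule sum_divisors_d_fun_le)
  finally show ?case by simp
qed

theorem lemma16:
  fixes j r n :: nat
  assumes "j \<ge> 1" and "r \<ge> 1" and "n \<ge> 1"
  shows "c_iter j (r - 1) n \<le> c_iter j r n \<and> c_fun j n \<le> c_iter j r n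
         \<and> c_iter j r n \<le> d_fun (j + r) n"
proof -
  have "c_iter j (r - 1) n \<le> c_iter j r n"
    using assms(3) by (rule c_iter_mono) simp
  moreover have "c_fun j n \<le> c_iter j r n"
    using c_iter_mono[OF assms(3), of 0 r j] by simp
  moreover have "c_iter j r n \<le> d_fun (j + r) n"
    using assms(3) by (rule c_iter_le_d_fun)
  ultimately show ?thesis by blast
qed

end
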